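(* For every positive integer $k$: (i) $\mathrm{Cl}_k(\pi/3)$ lies in the $\mathbb{Q}$-linear span of $S^{o}_{k,1}$; (ii) $\mathrm{Gl}_k(\pi/3)$ lies in the $\mathbb{Q}$-linear span of $S^{e}_{k,1}$ (which equals $S^e_{k,0}=\{\pi^k\}$).
   Context: $\mathrm{Li}_k(z)=\sum_{m\ge1}z^m/m^k$ (for $k=1$, $\mathrm{Li}_1(z)=-\log(1-z)$). $\mathrm{Cl}_k(\sigma)=\mathrm{Im}\,\mathrm{Li}_k(e^{i\sigma})$ if $k$ is even and $\mathrm{Re}\,\mathrm{Li}_k(e^{i\sigma})$ if $k$ is odd; $\mathrm{Gl}_k(\sigma)=\mathrm{Re}\,\mathrm{Li}_k(e^{i\sigma})$ if $k$ even and $\mathrm{Im}\,\mathrm{Li}_k(e^{i\sigma})$ if $k$ odd. $A(\theta)=\log|2\sin(\theta/2)|$; for $k_u\ge2$, $\mathrm{SLs}(k_1,\dots,k_n)=\int_0^{\pi/3}\int_0^{\theta_n}\cdots\int_0^{\theta_2}\prod_{u=1}^n(\theta_u-\pi/3)^{k_u-2}A(\theta_u)\,d\theta_1\cdots d\theta_n$, $\mathrm{SLs}(\emptyset)=1$. For $k,d\ge0$: $S^o_{k,d}=\{\pi^m\mathrm{SLs}(k_1,\dots,k_n): m+k_1+\dots+k_n=k,\ 0\le n\le d,\ n\text{ odd},\ m\ge0,\ k_i\ge2\}$ and $S^e_{k,d}$ is defined the same way with $n$ even. *)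

theory Defs
  imports "HOL-Analysis.Analysis"
begin

definition polylog :: "nat \<Rightarrow> complex \<Rightarrow> complex" where
  "polylog k z = (if k = 1 then - Ln (1 - z)
                  else (\<Sum>m. z ^ (Suc m) / (of_nat (Suc m)) ^ k))"

definition Cl :: "nat \<Rightarrow> real \<Rightarrow> real" where
  "Cl k \<sigma> = (if even k then Im (polylog k (cis \<sigma>)) else Re (polylog k (cis \<sigma>)))"

definition Gl :: "nat \<Rightarrow> real \<Rightarrow> real" where
  "Gl k \<sigma> = (if even k then Re (polylog k (cis \<sigma>)) else Im (polylog k (cis \<sigma>)))"

definition A_fun :: "real \<Rightarrow> real" where
  "A_fun \<theta> = ln \<bar>2 * sin (\<theta> / 2)\<bar>"

text \<open>Iterated integral helper: the list is given outermost-first, i.e.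
  SLs_aux [k_n, ..., k_1] t =
  int_0^t g_{k_n}(th_n) int_0^{th_n} ... int_0^{th_2} g_{k_1}(th_1) dth_1 ... dth_n,
  with g_k(th) = (th - pi/3)^(k-2) A(th).\<close>
fun SLs_aux :: "nat list \<Rightarrow> real \<Rightarrow> real" where
  "SLs_aux [] t = 1"
| "SLs_aux (k # ks) t =
     integral {0..t} (\<lambda>\<theta>. (\<theta> - pi/3) ^ (k - 2) * A_fun \<theta> * SLs_aux ks \<theta>)"

definition SLs :: "nat list \<Rightarrow> real" where
  "SLs ks = SLs_aux (rev ks) (pi / 3)"

definition S_odd :: "nat \<Rightarrow> nat \<Rightarrow> real set" where
  "S_odd k d = {pi ^ m * SLs ks | m ks. m + sum_list ks = k \<and> length ks \<le> d
                  \<and> odd (length ks) \<and> (\<forall>i\<in>set ks. 2 \<le> i)}"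

definition S_even :: "nat \<Rightarrow> nat \<Rightarrow> real set" where
  "S_even k d = {pi ^ m * SLs ks | m ks. m + sum_list ks = k \<and> length ks \<le> d
                  \<and> even (length ks) \<and> (\<forall>i\<in>set ks. 2 \<le> i)}"

definition in_rat_span :: "real \<Rightarrow> real set \<Rightarrow> bool" where
  "in_rat_span x S \<longleftrightarrow> (\<exists>F c. finite F \<and> F \<subseteq> S \<and> x = (\<Sum>s\<in>F. of_rat (c s) * s))"

end

theory Submission
  imports Defs
begin

(* Write zeta(j) = Li_j(1). Taylor's formula with integral remainder for t |-> Li_k(e^{it}), whose
   m-th derivative is i^m Li_{k-m}(e^{it}), gives

     Li_k(e^{ib}) = sum_{m<k-1} (ib)^m/m! zeta(k-m)
                    + i^k/(k-2)! int_0^b (b - t)^{k-2} ((pi - t)/2 + i A(t)) dt,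

   because -Li_1(e^{it}) = log(1 - e^{it}) = A(t) + i(t - pi)/2. For b = pi/3 the real part of the
   integral is a rational multiple of pi^k and its imaginary part one of SLs(k). So Li_k(e^{i pi/3})
   lies in i^k (Q pi^k + i V_k), V_k the Q-span of S^o_{k,1}, provided every zeta(j), j <= k, lies in
   the space of weight j; multiplication by (i pi)^m raises the weight by m. For zeta(k) itself, the
   values of cos(n pi/3) give Re Li_k(e^{i pi/3}) = c zeta(k) with rational c < 1, so taking real
   parts in the expansion expresses zeta(k) through the zeta(j), j < k. *)

section \<open>Rational spans and weight spaces\<close>

lemma in_rat_span_0 [simp]: "in_rat_span 0 S"
  unfolding in_rat_span_def by (rule exI[of _ "{}"]) simp

lemma in_rat_span_base: "s \<in> S \<Longrightarrow> in_rat_span s S"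
  unfolding in_rat_span_def by (intro exI[of _ "{s}"] exI[of _ "\<lambda>_. 1"]) simp

lemma in_rat_span_scale:
  assumes "in_rat_span x S" "c \<in> \<rat>"
  shows "in_rat_span (c * x) S"
proof -
  obtain F q where F: "finite F" "F \<subseteq> S" "x = (\<Sum>s\<in>F. of_rat (q s) * s)"
    using assms(1) unfolding in_rat_span_def by blast
  obtain r where r: "c = of_rat r"
    using assms(2) Rats_cases by blast
  have "c * x = (\<Sum>s\<in>F. of_rat (r * q s) * s)"
    unfolding F(3) r by (simp add: sum_distrib_left of_rat_mult mult.assoc)
  then show ?thesis
    unfolding in_rat_span_def using F by (intro exI[of _ F] exI[of _ "\<lambda>s. r * q s"]) simp
qed

lemma in_rat_span_add:
  assumes "in_rat_span x S" "in_rat_span y S"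
  shows "in_rat_span (x + y) S"
proof -
  obtain F c where F: "finite F" "F \<subseteq> S" "x = (\<Sum>s\<in>F. of_rat (c s) * s)"
    using assms(1) unfolding in_rat_span_def by blast
  obtain G d where G: "finite G" "G \<subseteq> S" "y = (\<Sum>s\<in>G. of_rat (d s) * s)"
    using assms(2) unfolding in_rat_span_def by blast
  define e where "e s = (if s \<in> F then c s else 0) + (if s \<in> G then d s else 0)" for s
  have "(\<Sum>s\<in>F \<union> G. of_rat (e s) * s)
      = (\<Sum>s\<in>F \<union> G. of_rat (if s \<in> F then c s else 0) * s)
        + (\<Sum>s\<in>F \<union> G. of_rat (if s \<in> G then d s else 0) * s)"
    unfolding e_def by (simp add: of_rat_add distrib_right sum.distrib)
  also have "\<dots> = x + y"
    unfolding F(3) G(3) using F(1) G(1)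
    by (intro arg_cong2[where f = "(+)"] sum.mono_neutral_cong_right) auto
  finally show ?thesis
    unfolding in_rat_span_def using F G by (metis finite_UnI le_sup_iff)
qed

lemma in_rat_span_sum:
  "finite I \<Longrightarrow> (\<And>i. i \<in> I \<Longrightarrow> in_rat_span (f i) S) \<Longrightarrow> in_rat_span (\<Sum>i\<in>I. f i) S"
  by (induction I rule: finite_induct) (auto intro: in_rat_span_add)

lemma in_rat_span_mult:
  assumes "in_rat_span x S" "(*) c ` S \<subseteq> T"
  shows "in_rat_span (c * x) T"
proof -
  obtain F q where F: "finite F" "F \<subseteq> S" "x = (\<Sum>s\<in>F. of_rat (q s) * s)"
    using assms(1) unfolding in_rat_span_def by blast
  have "in_rat_span (\<Sum>s\<in>F. of_rat (q s) * (c * s)) T"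
    using F(1,2) assms(2) by (intro in_rat_span_sum in_rat_span_scale in_rat_span_base) auto
  moreover have "c * x = (\<Sum>s\<in>F. of_rat (q s) * (c * s))"
    unfolding F(3) by (simp add: sum_distrib_left ac_simps)
  ultimately show ?thesis
    by simp
qed

lemma mult_pi_power_S_odd: "(*) (pi ^ m) ` S_odd n d \<subseteq> S_odd (n + m) d"
proof
  fix x
  assume "x \<in> (*) (pi ^ m) ` S_odd n d"
  then obtain j ks where "x = pi ^ m * (pi ^ j * SLs ks)" "j + sum_list ks = n"
      "length ks \<le> d" "odd (length ks)" "\<forall>i\<in>set ks. 2 \<le> i"
    unfolding S_odd_def by blast
  then show "x \<in> S_odd (n + m) d"
    unfolding S_odd_def by (intro CollectI exI[of _ "m + j"] exI[of _ ks]) (simp add: power_add)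
qed

lemma SLs_singleton_in_S_odd: "2 \<le> k \<Longrightarrow> SLs [k] \<in> S_odd k 1"
  unfolding S_odd_def by (intro CollectI exI[of _ 0] exI[of _ "[k]"]) simp

lemma S_even_eq_pi_power:
  assumes "d \<le> 1"
  shows "S_even k d = {pi ^ k}"
proof
  show "S_even k d \<subseteq> {pi ^ k}"
  proof
    fix x
    assume "x \<in> S_even k d"
    then obtain m ks where x: "x = pi ^ m * SLs ks" "m + sum_list ks = k"
        and ks: "length ks \<le> d" "even (length ks)"
      unfolding S_even_def by blast
    have "length ks = 0"
      using ks assms by presburger
    then show "x \<in> {pi ^ k}"
      using x by (simp add: SLs_def)
  qed
  show "{pi ^ k} \<subseteq> S_even k d"
    unfolding S_even_def by (auto intro!: exI[of _ k] exI[of _ "[]"] simp: SLs_def)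
qed

definition weight_space :: "nat \<Rightarrow> complex set" where
  "weight_space n = {w. in_rat_span (Re ((- \<i>) ^ n * w)) {pi ^ n}
                       \<and> in_rat_span (Im ((- \<i>) ^ n * w)) (S_odd n 1)}"

lemma weight_space_intro:
  assumes "in_rat_span p {pi ^ n}" "in_rat_span s (S_odd n 1)"
  shows "\<i> ^ n * Complex p s \<in> weight_space n"
proof -
  have eq: "(- \<i>) ^ n * (\<i> ^ n * Complex p s) = Complex p s"
    by (simp flip: mult.assoc power_mult_distrib)
  show ?thesis
    unfolding weight_space_def mem_Collect_eq eq using assms by simp
qed

lemma weight_space_add: "v \<in> weight_space n \<Longrightarrow> w \<in> weight_space n \<Longrightarrow> v + w \<in> weight_space n"
  unfolding weight_space_def mem_Collect_eq distrib_left plus_complex.sel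
  by (blast intro: in_rat_span_add)

lemma weight_space_sum:
  "finite I \<Longrightarrow> (\<And>i. i \<in> I \<Longrightarrow> f i \<in> weight_space n) \<Longrightarrow> (\<Sum>i\<in>I. f i) \<in> weight_space n"
proof (induction I rule: finite_induct)
  case empty
  then show ?case
    by (simp add: weight_space_def)
next
  case (insert i I)
  then show ?case
    by (simp add: weight_space_add)
qed

lemma weight_space_scale:
  assumes "w \<in> weight_space n" "c \<in> \<rat>"
  shows "of_real c * w \<in> weight_space n"
proof -
  have Re: "Re ((- \<i>) ^ n * (of_real c * w)) = c * Re ((- \<i>) ^ n * w)"
    and Im: "Im ((- \<i>) ^ n * (of_real c * w)) = c * Im ((- \<i>) ^ n * w)"
    by (simp_all add: algebra_simps)
  show ?thesis
    using assms unfolding weight_space_def mem_Collect_eq Re Im by (blast intro: in_rat_span_scale)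
qed

lemma weight_space_cnj:
  assumes "w \<in> weight_space n"
  shows "cnj w \<in> weight_space n"
proof -
  define z where "z = (- \<i>) ^ n * w"
  have "(- \<i>) ^ n * cnj w = cnj (of_real ((- 1) ^ n) * z)"
    unfolding z_def by (simp flip: mult.assoc power_mult_distrib)
  then have Re: "Re ((- \<i>) ^ n * cnj w) = (- 1) ^ n * Re z"
    and Im: "Im ((- \<i>) ^ n * cnj w) = - ((- 1) ^ n) * Im z"
    by simp_all
  have "(- 1) ^ n \<in> \<rat>" "- ((- 1) ^ n) \<in> \<rat>"
    by simp_all
  then show ?thesis
    using assms unfolding weight_space_def mem_Collect_eq Re Im z_def
    by (blast intro: in_rat_span_scale)
qed

lemma weight_space_Re: "w \<in> weight_space n \<Longrightarrow> of_real (Re w) \<in> weight_space n"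
  using weight_space_scale[OF weight_space_add[OF _ weight_space_cnj], of w n w "1/2"]
  by (simp add: complex_add_cnj)

lemma weight_space_mult_i_pi_power:
  assumes "w \<in> weight_space n" "c \<in> \<rat>"
  shows "of_real (c * pi ^ m) * \<i> ^ m * w \<in> weight_space (n + m)"
proof -
  define z where "z = (- \<i>) ^ n * w"
  have eq: "(- \<i>) ^ (n + m) * (of_real (c * pi ^ m) * \<i> ^ m * w) = of_real (c * pi ^ m) * z"
    unfolding z_def by (simp add: power_add ac_simps flip: power_mult_distrib)
  have Re: "Re ((- \<i>) ^ (n + m) * (of_real (c * pi ^ m) * \<i> ^ m * w)) = c * (pi ^ m * Re z)"
    and Im: "Im ((- \<i>) ^ (n + m) * (of_real (c * pi ^ m) * \<i> ^ m * w)) = c * (pi ^ m * Im z)"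
    unfolding eq by simp_all
  have "(*) (pi ^ m) ` {pi ^ n} \<subseteq> {pi ^ (n + m)}"
    by (simp add: power_add)
  then show ?thesis
    using assms mult_pi_power_S_odd[of m n 1]
    unfolding weight_space_def mem_Collect_eq Re Im z_def
    by (blast intro: in_rat_span_scale in_rat_span_mult)
qed

lemma weight_space_parts:
  assumes "w \<in> weight_space n"
  shows "in_rat_span (if even n then Re w else Im w) {pi ^ n}"
    and "in_rat_span (if even n then Im w else Re w) (S_odd n 1)"
proof -
  define z where "z = (- \<i>) ^ n * w"
  have z: "in_rat_span (Re z) {pi ^ n}" "in_rat_span (Im z) (S_odd n 1)"
    using assms unfolding weight_space_def mem_Collect_eq z_def by blast+
  have sq: "(- 1) ^ m * (- 1) ^ m = (1 :: real)" for m :: nat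
    by (simp flip: power_add)
  obtain m where "n = 2 * m \<or> n = 2 * m + 1"
    by (metis evenE oddE)
  then obtain a b :: real where ab: "a \<in> \<rat>" "b \<in> \<rat>"
    "(if even n then Re w else Im w) = a * Re z" "(if even n then Im w else Re w) = b * Im z"
  proof
    assume n: "n = 2 * m"
    have "z = of_real ((- 1) ^ m) * w"
      unfolding z_def n by (simp add: power_mult)
    then show thesis
      using n by (intro that[of "(- 1) ^ m" "(- 1) ^ m"]) (simp_all add: mult.assoc[symmetric] sq)
  next
    assume n: "n = 2 * m + 1"
    have "z = of_real ((- 1) ^ m) * (- \<i> * w)"
      unfolding z_def n by (simp add: power_mult)
    then show thesis
      using n by (intro that[of "(- 1) ^ m" "- ((- 1) ^ m)"]) (simp_all add: mult.assoc[symmetric] sq)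
  qed
  show "in_rat_span (if even n then Re w else Im w) {pi ^ n}"
    unfolding ab(3) using z(1) ab(1) by (rule in_rat_span_scale)
  show "in_rat_span (if even n then Im w else Re w) (S_odd n 1)"
    unfolding ab(4) using z(2) ab(2) by (rule in_rat_span_scale)
qed

section \<open>The polylogarithm series\<close>

(* Li_k as a bare power series, without the convention at k = 1 that polylog uses; this way
   differentiation lowers the index uniformly. *)
definition polylog_series :: "nat \<Rightarrow> complex \<Rightarrow> complex" where
  "polylog_series k z = (\<Sum>m. z ^ Suc m / of_nat (Suc m) ^ k)"

lemma polylog_eq_polylog_series: "k \<noteq> 1 \<Longrightarrow> polylog k z = polylog_series k z"
  by (simp add: polylog_def polylog_series_def)

lemma norm_power_div_Suc_power_le: "norm (z ^ n / of_nat (Suc m) ^ k :: complex) \<le> norm z ^ n"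
proof -
  have "norm z ^ n / real (Suc m) ^ k \<le> norm z ^ n / 1"
    by (intro divide_left_mono) auto
  then show ?thesis
    by (simp add: norm_divide norm_power del: of_nat_Suc)
qed

lemma norm_polylog_term_le:
  assumes "norm z \<le> 1" "2 \<le> k"
  shows "norm (z ^ n / of_nat (Suc m) ^ k :: complex) \<le> 1 / real (Suc m) ^ 2"
proof -
  have "norm z ^ n / real (Suc m) ^ k \<le> 1 / real (Suc m) ^ k"
    using assms(1) by (intro divide_right_mono power_le_one) auto
  also have "\<dots> \<le> 1 / real (Suc m) ^ 2"
    using assms(2) by (intro divide_left_mono power_increasing) auto
  finally show ?thesis
    by (simp add: norm_divide norm_power del: of_nat_Suc)
qed

lemma summable_inverse_Suc_power: "2 \<le> k \<Longrightarrow> summable (\<lambda>m. 1 / real (Suc m) ^ k)"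
  using inverse_power_summable[of k, where 'a = real] by (subst summable_Suc_iff) (simp add: inverse_eq_divide)

lemma summable_polylog_series:
  assumes "norm (z :: complex) \<le> 1" "2 \<le> k"
  shows "summable (\<lambda>m. z ^ Suc m / of_nat (Suc m) ^ k)"
proof (rule summable_comparison_test'[where N = 0])
  show "norm (z ^ Suc m / of_nat (Suc m) ^ k) \<le> 1 / real (Suc m) ^ 2" for m
    using assms by (rule norm_polylog_term_le)
qed (rule summable_inverse_Suc_power, simp)

lemma summable_power_div_Suc_power:
  assumes "norm (z :: complex) < 1"
  shows "summable (\<lambda>m. z ^ m / of_nat (Suc m) ^ k)"
proof (rule summable_comparison_test'[where N = 0])
  show "summable (\<lambda>m. norm z ^ m)"
    using assms by (simp add: summable_geometric)
  show "norm (z ^ m / of_nat (Suc m) ^ k) \<le> norm z ^ m" for m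
    by (rule norm_power_div_Suc_power_le)
qed

lemma summable_polylog_series_disc:
  assumes "norm (z :: complex) < 1"
  shows "summable (\<lambda>m. z ^ Suc m / of_nat (Suc m) ^ k)"
  using summable_mult[OF summable_power_div_Suc_power[OF assms, of k], of z]
  by (simp only: power_Suc times_divide_eq_right)

lemma mult_power_div_Suc_power_suminf:
  assumes "norm (z :: complex) < 1"
  shows "z * (\<Sum>m. z ^ m / of_nat (Suc m) ^ k) = polylog_series k z"
  unfolding polylog_series_def suminf_mult[OF summable_power_div_Suc_power[OF assms], symmetric]
  by (simp add: mult.assoc)

lemma polylog_series_has_field_derivative:
  assumes "norm z < 1"
  shows "(polylog_series (Suc k) has_field_derivative (\<Sum>m. z ^ m / of_nat (Suc m) ^ k)) (at z)"
proof -
  define c :: "nat \<Rightarrow> complex" where "c n = (if n = 0 then 0 else 1 / of_nat n ^ Suc k)" for n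
  have sums: "(\<lambda>n. c n * w ^ n) sums polylog_series (Suc k) w" if "norm w < 1" for w
  proof -
    have "summable (\<lambda>m. w ^ Suc m / of_nat (Suc m) ^ Suc k)"
      using that by (rule summable_polylog_series_disc)
    then have "(\<lambda>m. c (Suc m) * w ^ Suc m) sums polylog_series (Suc k) w"
      unfolding polylog_series_def c_def by (simp add: summable_sums del: of_nat_Suc power_Suc)
    then show ?thesis
      by (subst (asm) sums_Suc_iff) (simp add: c_def)
  qed
  have "((\<lambda>w. \<Sum>n. c n * w ^ n) has_field_derivative (\<Sum>n. diffs c n * z ^ n)) (at z)"
    using sums assms by (intro termdiffs_strong'[of 1]) (auto simp: sums_iff)
  moreover have "diffs c n = 1 / of_nat (Suc n) ^ k" for n
    unfolding diffs_def c_def by (simp add: field_simps del: of_nat_Suc)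
  moreover have "\<forall>\<^sub>F w in nhds z. polylog_series (Suc k) w = (\<Sum>n. c n * w ^ n)"
    using eventually_nhds_in_open[of "ball 0 1" z] assms sums
    by (auto elim!: eventually_mono simp: sums_iff)
  ultimately show ?thesis
    by (simp add: DERIV_cong_ev)
qed

lemma has_vector_derivative_polylog_series_circle:
  assumes "0 \<le> r" "r < 1"
  shows "((\<lambda>t. polylog_series (Suc k) (of_real r * cis t)) has_vector_derivative
           \<i> * polylog_series k (of_real r * cis t)) (at t within S)"
proof -
  define z where "z = of_real r * cis t"
  have z: "norm z < 1"
    using assms unfolding z_def by (simp add: norm_mult)
  have "((\<lambda>w. polylog_series (Suc k) (of_real r * exp (\<i> * w))) has_field_derivative
          (\<Sum>m. z ^ m / of_nat (Suc m) ^ k) * (of_real r * (exp (\<i> * of_real t) * \<i>))) (at (of_real t))"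
    using z unfolding z_def cis_conv_exp
    by (intro DERIV_chain2[OF polylog_series_has_field_derivative]) (auto intro!: derivative_eq_intros)
  also have "(\<Sum>m. z ^ m / of_nat (Suc m) ^ k) * (of_real r * (exp (\<i> * of_real t) * \<i>))
      = \<i> * polylog_series k z"
    using mult_power_div_Suc_power_suminf[OF z] unfolding z_def cis_conv_exp by (simp add: ac_simps)
  finally show ?thesis
    unfolding z_def cis_conv_exp by (rule has_vector_derivative_real_field)
qed

lemma continuous_on_polylog_series:
  assumes "2 \<le> k"
  shows "continuous_on (cball 0 1) (polylog_series k)"
proof -
  have "uniform_limit (cball 0 1) (\<lambda>n z. \<Sum>m<n. z ^ Suc m / of_nat (Suc m) ^ k)
          (polylog_series k) sequentially"
    unfolding polylog_series_def[abs_def] using assms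
    by (intro Weierstrass_m_test[OF _ summable_inverse_Suc_power[of 2]] norm_polylog_term_le) auto
  then show ?thesis
    by (rule uniform_limit_theorem[rotated]) (auto intro!: always_eventually continuous_intros simp del: of_nat_Suc)
qed

lemma tendsto_polylog_series_radial:
  assumes "2 \<le> k" "norm w \<le> 1" "r \<longlonglongrightarrow> 1" "\<And>n. r n \<in> {0..1}"
  shows "(\<lambda>n. polylog_series k (of_real (r n) * w)) \<longlonglongrightarrow> polylog_series k w"
proof (rule continuous_on_tendsto_compose[OF continuous_on_polylog_series[OF assms(1)]])
  show "(\<lambda>n. of_real (r n) * w) \<longlonglongrightarrow> w"
    using tendsto_mult[OF tendsto_of_real[OF assms(3)] tendsto_const[of w]] by simp
  show "\<forall>\<^sub>F n in sequentially. of_real (r n) * w \<in> cball 0 1"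
    using assms(2,4) by (intro always_eventually) (auto simp: norm_mult intro: mult_le_one)
qed (use assms(2) in simp)

lemma polylog_series_1_eq_Ln:
  assumes "norm z < 1"
  shows "polylog_series 1 z = - Ln (1 - z)"
proof -
  have "(\<lambda>n. - (z ^ n) / of_nat n) sums Ln (1 - z)"
    using Ln_series'[of "- z"] assms by simp
  then have "(\<lambda>n. - (z ^ Suc n) / of_nat (Suc n)) sums Ln (1 - z)"
    by (subst sums_Suc_iff) simp
  from sums_minus[OF this] show ?thesis
    unfolding polylog_series_def by (simp add: sums_iff del: of_nat_Suc)
qed

lemma polylog_series_at_1:
  assumes "2 \<le> k"
  shows "polylog_series k 1 = of_real (\<Sum>m. 1 / real (Suc m) ^ k)"
proof -
  have "(\<lambda>m. of_real (1 / real (Suc m) ^ k) :: complex) sums of_real (\<Sum>m. 1 / real (Suc m) ^ k)"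
    using summable_inverse_Suc_power[OF assms] by (simp only: sums_of_real_iff summable_sums)
  then show ?thesis
    unfolding polylog_series_def by (simp add: sums_iff del: of_nat_Suc)
qed

section \<open>Taylor expansion on the unit circle\<close>

lemma has_integral_polylog_series_taylor_circle:
  assumes "0 \<le> r" "r < 1" "2 \<le> k" "0 \<le> b"
  shows "((\<lambda>t. ((b - t) ^ (k - 2) / fact (k - 2)) *\<^sub>R
              (\<i> ^ (k - 1) * polylog_series 1 (of_real r * cis t)))
          has_integral polylog_series k (of_real r * cis b)
            - (\<Sum>i<k - 1. (b ^ i / fact i) *\<^sub>R (\<i> ^ i * polylog_series (k - i) (of_real r)))) {0..b}"
proof -
  define D where "D m t = \<i> ^ m * polylog_series (k - m) (of_real r * cis t)" for m t
  have "((\<lambda>t. ((b - t) ^ (k - 1 - 1) / fact (k - 1 - 1)) *\<^sub>R D (k - 1) t)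
          has_integral D 0 b - (\<Sum>i<k - 1. ((b - 0) ^ i / fact i) *\<^sub>R D i 0)) {0..b}"
  proof (rule Taylor_has_integral)
    fix m t
    assume "m < k - 1"
    then have k: "k - m = Suc (k - Suc m)"
      by simp
    have "((\<lambda>t. \<i> ^ m * polylog_series (Suc (k - Suc m)) (of_real r * cis t)) has_vector_derivative
            \<i> ^ m * (\<i> * polylog_series (k - Suc m) (of_real r * cis t))) (at t within {0..b})"
      by (intro has_vector_derivative_mult_right has_vector_derivative_polylog_series_circle assms)
    then show "(D m has_vector_derivative D (Suc m) t) (at t within {0..b})"
      unfolding D_def k by (simp add: ac_simps)
  qed (use assms in auto)
  moreover have "k - 1 - 1 = k - 2" "k - (k - 1) = 1"
    using assms(3) by simp_all
  ultimately show ?thesis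
    unfolding D_def by simp
qed

lemma half_le_sin:
  assumes "0 \<le> t" "t \<le> pi / 3"
  shows "t / 2 \<le> sin t"
proof (cases "t = 0")
  case False
  then obtain z where z: "0 < z" "z < t" "sin t - sin 0 = (t - 0) * cos z"
    using MVT2[of 0 t sin cos] assms by (auto intro: DERIV_sin)
  have "1 / 2 \<le> cos z"
    using cos_monotone_0_pi_le[of z "pi / 3"] z assms by (simp add: cos_60)
  then show ?thesis
    using z mult_left_mono[of "1/2" "cos z" t] by simp
qed simp

lemma norm_Ln_one_minus_le:
  assumes r: "1/2 \<le> r" "r \<le> 1" and t: "0 < t" "t \<le> pi / 3"
  shows "norm (Ln (1 - of_real r * cis t)) \<le> 6 + 2 * t powr (-1/2)"
proof -
  define u where "u = 1 - of_real r * cis t"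
  have "t / 4 \<le> r * sin t"
    using mult_mono[of "1/2" r "t/2" "sin t"] half_le_sin[of t] r t by simp
  also have "r * sin t \<le> norm u"
    using abs_Im_le_cmod[of u] half_le_sin[of t] r t unfolding u_def by simp
  finally have lower: "t / 4 \<le> norm u" .
  then have u0: "u \<noteq> 0"
    using t by auto
  have "norm u \<le> 2"
    using norm_triangle_ineq4[of 1 "of_real r * cis t"] r unfolding u_def by (simp add: norm_mult)
  then have "ln (norm u) \<le> 1"
    using lower t ln_2_less_1 ln_le_cancel_iff[of "norm u" 2] by fastforce
  moreover have "ln (t / 4) \<le> ln (norm u)"
    using lower t by (intro ln_mono) auto
  moreover have "ln (t / 4) = ln t - 2 * ln 2"
    using t by (simp add: ln_div ln_realpow[of 2 2, simplified])
  moreover have "- ln t \<le> 2 * t powr (-1/2)"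
    using ln_le_minus_one[of "t powr (-1/2)"] t by (simp add: ln_powr)
  ultimately have "\<bar>ln (norm u)\<bar> \<le> 2 + 2 * t powr (-1/2)"
    using ln_2_less_1 by (simp add: abs_le_iff) (smt (verit) powr_ge_zero)
  moreover have "norm (Ln u) \<le> \<bar>ln (norm u)\<bar> + pi"
    using cmod_le[of "Ln u"] mpi_less_Im_Ln[of u] Im_Ln_le_pi[of u] u0 by (simp add: abs_le_iff)
  ultimately show ?thesis
    using pi_less_4 unfolding u_def by linarith
qed

lemma norm_polylog_series_1_circle_le:
  assumes "1/2 \<le> r" "r < 1" "0 < t" "t \<le> pi / 3"
  shows "norm (polylog_series 1 (of_real r * cis t)) \<le> 6 + 2 * t powr (-1/2)"
  using assms norm_Ln_one_minus_le[of r t] polylog_series_1_eq_Ln[of "of_real r * cis t"]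
  by (simp add: norm_mult)

lemma tendsto_polylog_series_1_radial:
  assumes "r \<longlonglongrightarrow> 1" "\<And>n. r n \<in> {0..<1}" "0 < t" "t < pi"
  shows "(\<lambda>n. polylog_series 1 (of_real (r n) * cis t)) \<longlonglongrightarrow> - Ln (1 - cis t)"
proof -
  have "1 - cis t \<notin> \<real>\<^sub>\<le>\<^sub>0"
    using sin_gt_zero[of t] assms(3,4) by (auto simp: complex_nonpos_Reals_iff)
  moreover have "(\<lambda>n. of_real (r n) * cis t) \<longlonglongrightarrow> cis t"
    using tendsto_mult[OF tendsto_of_real[OF assms(1)] tendsto_const[of "cis t"]] by simp
  ultimately have "(\<lambda>n. - Ln (1 - of_real (r n) * cis t)) \<longlonglongrightarrow> - Ln (1 - cis t)"
    by (intro tendsto_minus tendsto_Ln tendsto_diff tendsto_const)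
  moreover have "polylog_series 1 (of_real (r n) * cis t) = - Ln (1 - of_real (r n) * cis t)" for n
    using assms(2)[of n] by (intro polylog_series_1_eq_Ln) (simp add: norm_mult)
  ultimately show ?thesis
    by simp
qed

lemma abs_power_diff_div_fact_le:
  fixes b t :: real
  assumes "0 \<le> t" "t \<le> b"
  shows "\<bar>(b - t) ^ n / fact n\<bar> \<le> b ^ n"
proof -
  have "\<bar>(b - t) ^ n / fact n\<bar> = (b - t) ^ n / fact n"
    using assms by simp
  also have "\<dots> \<le> (b - t) ^ n / 1"
    using assms by (intro divide_left_mono) auto
  also have "\<dots> \<le> b ^ n"
    using assms by (simp add: power_mono)
  finally show ?thesis .
qed

lemma radii_tendsto_1: "\<exists>r. r \<longlonglongrightarrow> 1 \<and> (\<forall>n. 1/2 \<le> r n \<and> r n < (1 :: real))"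
proof (intro exI conjI allI)
  show "(\<lambda>n. 1 - inverse (real (Suc (Suc n)))) \<longlonglongrightarrow> 1"
    using LIMSEQ_Suc[OF LIMSEQ_inverse_real_of_nat_add_minus[of 1]] by simp
qed (auto simp: field_simps)

lemma has_integral_polylog_series_taylor_cis:
  assumes "2 \<le> k" "0 \<le> b" "b \<le> pi / 3"
  shows "((\<lambda>t. ((b - t) ^ (k - 2) / fact (k - 2)) *\<^sub>R (\<i> ^ (k - 1) * - Ln (1 - cis t)))
          has_integral polylog_series k (cis b)
            - (\<Sum>i<k - 1. (b ^ i / fact i) *\<^sub>R (\<i> ^ i * polylog_series (k - i) 1))) {0..b}"
proof -
  (* Taylor's formula holds on the circles of radius r n < 1; dominated convergence passes to the
     unit circle, with a majorant for the logarithmic singularity of Li_1(e^{it}) at t = 0. *)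
  obtain r :: "nat \<Rightarrow> real" where r_lim: "r \<longlonglongrightarrow> 1" and "\<And>n. 1/2 \<le> r n \<and> r n < 1"
    using radii_tendsto_1 by blast
  then have r: "1/2 \<le> r n" "r n \<in> {0..<1}" "r n \<in> {0..1}" for n
    by (auto intro: less_imp_le order.trans[of 0 "1/2"])
  have radial: "(\<lambda>n. polylog_series j (of_real (r n) * w)) \<longlonglongrightarrow> polylog_series j w"
    if "2 \<le> j" "norm w \<le> 1" for j w
    using that r_lim r(3) by (rule tendsto_polylog_series_radial)
  define p where "p t = (b - t) ^ (k - 2) / fact (k - 2)" for t
  define f where "f n t = (if t = 0 then 0
                    else p t *\<^sub>R (\<i> ^ (k - 1) * polylog_series 1 (of_real (r n) * cis t)))" for n t
  define g where "g t = (if t = 0 then 0 else p t *\<^sub>R (\<i> ^ (k - 1) * - Ln (1 - cis t)))" for t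
  define h where "h t = b ^ (k - 2) * (6 + 2 * t powr (-1/2))" for t
  have "(f n has_integral polylog_series k (of_real (r n) * cis b)
          - (\<Sum>i<k - 1. (b ^ i / fact i) *\<^sub>R (\<i> ^ i * polylog_series (k - i) (of_real (r n))))) {0..b}"
    for n
    using r[of n] assms
    by (intro has_integral_spike[OF negligible_sing[of 0] _ has_integral_polylog_series_taylor_circle])
      (auto simp: f_def p_def)
  moreover have "h integrable_on {0..b}"
    unfolding h_def using assms(2)
    by (intro integrable_on_mult_right integrable_add integrable_const_ivl integrable_on_powr_from_0)
      auto
  moreover have "\<forall>t\<in>{0..b}. norm (f n t) \<le> h t" for n
  proof
    fix t
    assume t: "t \<in> {0..b}"
    then have "\<bar>p t\<bar> \<le> b ^ (k - 2)"
      unfolding p_def by (intro abs_power_diff_div_fact_le) auto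
    then show "norm (f n t) \<le> h t"
      using norm_polylog_series_1_circle_le[of "r n" t] r[of n] t assms
      by (cases "t = 0") (auto simp: f_def h_def norm_mult norm_power intro!: mult_mono)
  qed
  moreover have "\<forall>t\<in>{0..b}. (\<lambda>n. f n t) \<longlonglongrightarrow> g t"
  proof
    fix t
    assume t: "t \<in> {0..b}"
    have "(\<lambda>n. p t *\<^sub>R (\<i> ^ (k - 1) * polylog_series 1 (of_real (r n) * cis t)))
        \<longlonglongrightarrow> p t *\<^sub>R (\<i> ^ (k - 1) * - Ln (1 - cis t))" if "t \<noteq> 0"
      using t that assms
      by (intro tendsto_scaleR tendsto_const tendsto_mult_left tendsto_polylog_series_1_radial r_lim r) auto
    then show "(\<lambda>n. f n t) \<longlonglongrightarrow> g t"
      unfolding f_def g_def by (cases "t = 0") auto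
  qed
  moreover have "(\<lambda>n. polylog_series k (of_real (r n) * cis b)
          - (\<Sum>i<k - 1. (b ^ i / fact i) *\<^sub>R (\<i> ^ i * polylog_series (k - i) (of_real (r n)))))
      \<longlonglongrightarrow> polylog_series k (cis b)
          - (\<Sum>i<k - 1. (b ^ i / fact i) *\<^sub>R (\<i> ^ i * polylog_series (k - i) 1))"
    using assms by (intro tendsto_intros radial radial[where w = 1, simplified]) auto
  ultimately have G: "(g has_integral polylog_series k (cis b)
      - (\<Sum>i<k - 1. (b ^ i / fact i) *\<^sub>R (\<i> ^ i * polylog_series (k - i) 1))) {0..b}"
    by (rule has_integral_dominated_convergence)
  show ?thesis
    by (rule has_integral_spike[OF negligible_sing[of 0] _ G]) (simp add: g_def p_def)
qed

lemma Ln_one_minus_cis: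
  assumes "0 < t" "t < 2 * pi"
  shows "Ln (1 - cis t) = Complex (A_fun t) ((t - pi) / 2)"
proof -
  have s: "0 < sin (t / 2)"
    using assms by (intro sin_gt_zero) auto
  have "cis ((t - pi) / 2) = Complex (sin (t / 2)) (- cos (t / 2))"
    by (simp add: cis.ctr cos_diff sin_diff diff_divide_distrib)
  moreover have "cos t = 1 - 2 * sin (t / 2) ^ 2" "sin t = 2 * sin (t / 2) * cos (t / 2)"
    using cos_double_sin[of "t / 2"] sin_double[of "t / 2"] by simp_all
  ultimately have "exp (Complex (A_fun t) ((t - pi) / 2)) = 1 - cis t"
    using s unfolding exp_eq_polar A_fun_def by (simp add: complex_eq_iff power2_eq_square)
  moreover have "Ln (exp (Complex (A_fun t) ((t - pi) / 2))) = Complex (A_fun t) ((t - pi) / 2)"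
    using assms by (intro Ln_exp) auto
  ultimately show ?thesis
    by simp
qed

lemma fact_in_Rats: "(fact n :: real) \<in> \<rat>"
  by (metis Rats_of_nat of_nat_fact)

lemma has_integral_polylog_series_cis_remainder:
  assumes "2 \<le> k" "0 \<le> b" "b \<le> pi / 3"
  shows "((\<lambda>t. ((b - t) ^ (k - 2) / fact (k - 2)) *\<^sub>R Complex ((pi - t) / 2) (A_fun t))
          has_integral (- \<i>) ^ k * (polylog_series k (cis b)
            - (\<Sum>i<k - 1. (b ^ i / fact i) *\<^sub>R (\<i> ^ i * polylog_series (k - i) 1)))) {0..b}"
proof -
  have unit: "(- \<i>) ^ k * \<i> ^ (k - 1) = - \<i>"
    using assms(1) by (cases k) (simp_all flip: mult.assoc power_mult_distrib)
  have "(- \<i>) ^ k * (c *\<^sub>R (\<i> ^ (k - 1) * - Ln (1 - cis t))) = c *\<^sub>R Complex ((pi - t) / 2) (A_fun t)"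
    if "0 < t" "t \<le> b" for c t
  proof -
    have "(- \<i>) ^ k * (c *\<^sub>R (\<i> ^ (k - 1) * - Ln (1 - cis t)))
        = c *\<^sub>R (((- \<i>) ^ k * \<i> ^ (k - 1)) * - Ln (1 - cis t))"
      by (simp only: mult_scaleR_right mult.assoc)
    also have "\<dots> = c *\<^sub>R (\<i> * Ln (1 - cis t))"
      unfolding unit by simp
    also have "\<dots> = c *\<^sub>R Complex ((pi - t) / 2) (A_fun t)"
      using that assms by (simp add: Ln_one_minus_cis complex_eq_iff field_simps)
    finally show ?thesis .
  qed
  then show ?thesis
    by (intro has_integral_spike[OF negligible_sing[of 0] _
          has_integral_mult_right[OF has_integral_polylog_series_taylor_cis[OF assms]]]) auto
qed

lemma has_integral_power_diff:
  assumes "0 \<le> b"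
  shows "((\<lambda>t. (b - t) ^ n) has_integral b ^ Suc n / real (Suc n)) {0..b}"
proof -
  define P where "P t = - ((b - t) ^ Suc n) / real (Suc n)" for t
  have "((\<lambda>t. (b - t) ^ n) has_integral (P b - P 0)) {0..b}"
    using assms unfolding P_def
    by (intro fundamental_theorem_of_calculus)
      (auto intro!: derivative_eq_intros simp: has_real_derivative_iff_has_vector_derivative[symmetric]
        simp del: of_nat_Suc power_Suc)
  then show ?thesis
    by (simp add: P_def)
qed

lemma has_integral_power_diff_pi_div_3:
  "((\<lambda>t. (pi / 3 - t) ^ n * ((pi - t) / 2))
      has_integral (1 / (2 * real (n + 2)) + 1 / real (n + 1)) * (pi / 3) ^ (n + 2)) {0..pi / 3}"
proof -
  define b where "b = pi / 3"
  have I: "((\<lambda>t. (b - t) ^ Suc n * (1 / 2) + b * (b - t) ^ n)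
      has_integral b ^ Suc (Suc n) / real (Suc (Suc n)) * (1 / 2) + b * (b ^ Suc n / real (Suc n))) {0..b}"
    unfolding b_def
    by (intro has_integral_add has_integral_mult_left has_integral_mult_right has_integral_power_diff)
      simp_all
  have "pi = 3 * b"
    unfolding b_def by simp
  then have integrand: "(\<lambda>t. (b - t) ^ Suc n * (1 / 2) + b * (b - t) ^ n)
      = (\<lambda>t. (b - t) ^ n * ((pi - t) / 2))"
    by (intro ext) (simp add: field_simps)
  have total: "b ^ Suc (Suc n) / real (Suc (Suc n)) * (1 / 2) + b * (b ^ Suc n / real (Suc n))
      = (1 / (2 * real (n + 2)) + 1 / real (n + 1)) * b ^ (n + 2)"
    by (simp add: field_simps)
  show ?thesis
    using I unfolding integrand total unfolding b_def .
qed

lemma polylog_series_cis_pi_div_3_remainder_in_weight_space: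
  assumes "2 \<le> k"
  shows "polylog_series k (cis (pi / 3))
           - (\<Sum>i<k - 1. ((pi / 3) ^ i / fact i) *\<^sub>R (\<i> ^ i * polylog_series (k - i) 1))
         \<in> weight_space k"
proof -
  define R where "R = polylog_series k (cis (pi / 3))
           - (\<Sum>i<k - 1. ((pi / 3) ^ i / fact i) *\<^sub>R (\<i> ^ i * polylog_series (k - i) 1))"
  define N where "N = k - 2"
  define f where "f t = ((pi / 3 - t) ^ N / fact N) *\<^sub>R Complex ((pi - t) / 2) (A_fun t)" for t
  have k: "k = N + 2"
    using assms unfolding N_def by simp
  have I: "(f has_integral (- \<i>) ^ k * R) {0..pi / 3}"
    unfolding R_def N_def f_def using assms by (intro has_integral_polylog_series_cis_remainder) auto
  define c where "c = 1 / fact N * (1 / (2 * real (N + 2)) + 1 / real (N + 1)) / 3 ^ k"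
  have "(\<lambda>t. Re (f t)) = (\<lambda>t. 1 / fact N * ((pi / 3 - t) ^ N * ((pi - t) / 2)))"
    by (simp add: f_def)
  then have "((\<lambda>t. 1 / fact N * ((pi / 3 - t) ^ N * ((pi - t) / 2))) has_integral Re ((- \<i>) ^ k * R))
      {0..pi / 3}"
    using has_integral_Re[OF I] by simp
  then have "Re ((- \<i>) ^ k * R)
      = 1 / fact N * ((1 / (2 * real (N + 2)) + 1 / real (N + 1)) * (pi / 3) ^ (N + 2))"
    by (rule has_integral_unique[OF _ has_integral_mult_right[OF has_integral_power_diff_pi_div_3]])
  then have Re: "Re ((- \<i>) ^ k * R) = c * pi ^ k"
    by (simp add: c_def k power_divide)
  have "(t - pi / 3) ^ N * A_fun t = (- 1) ^ N * fact N * Im (f t)" for t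
    using power_minus[of "pi / 3 - t" N] by (simp add: f_def)
  then have "SLs [k] = integral {0..pi / 3} (\<lambda>t. (- 1) ^ N * fact N * Im (f t))"
    by (simp add: SLs_def k)
  also have "\<dots> = (- 1) ^ N * fact N * Im ((- \<i>) ^ k * R)"
    by (rule integral_unique[OF has_integral_mult_right[OF has_integral_Im[OF I]]])
  finally have Im: "Im ((- \<i>) ^ k * R) = (- 1) ^ N / fact N * SLs [k]"
    by (simp add: field_simps flip: power_add)
  have "c \<in> \<rat>"
    unfolding c_def by (intro Rats_mult Rats_divide Rats_add Rats_power) (simp_all add: fact_in_Rats)
  moreover have "(- 1) ^ N / fact N \<in> (\<rat> :: real set)"
    by (simp add: fact_in_Rats)
  ultimately show ?thesis
    unfolding weight_space_def mem_Collect_eq R_def[symmetric] Re Im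
    using SLs_singleton_in_S_odd[OF assms] by (blast intro: in_rat_span_scale in_rat_span_base)
qed

section \<open>Zeta values and the value at pi/3\<close>

lemma cos_nat_mult_pi_div_3:
  "cos (real n * pi / 3) = 1/2 - of_bool (2 dvd n) - 3/2 * of_bool (3 dvd n) + 3 * of_bool (6 dvd n)"
proof -
  define r where "r = n mod 6"
  have "real n = real r + 6 * real (n div 6)"
    using mod_mult_div_eq[of n 6] unfolding r_def by (metis of_nat_add of_nat_mult of_nat_numeral)
  then have "cos (real n * pi / 3) = cos (real r * pi / 3 + of_nat (n div 6) * (2 * of_real pi))"
    by (simp add: field_simps)
  also have "\<dots> = cos (real r * pi / 3)"
    by (rule cos.plus_of_nat)
  also have "\<dots> = 1/2 - of_bool (2 dvd r) - 3/2 * of_bool (3 dvd r) + 3 * of_bool (6 dvd r)"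
  proof -
    have "cos (2 * pi / 3) = - 1/2" "cos (4 * pi / 3) = - 1/2" "cos (5 * pi / 3) = 1/2"
      using cos_pi_minus[of "pi / 3"] cos_periodic_pi[of "pi / 3"] cos_2pi_minus[of "pi / 3"]
      by (simp_all add: cos_60 field_simps)
    moreover have "r \<in> {0, 1, 2, 3, 4, 5}"
      unfolding r_def by auto
    ultimately show ?thesis
      by (auto simp: cos_60)
  qed
  also have "\<dots> = 1/2 - of_bool (2 dvd n) - 3/2 * of_bool (3 dvd n) + 3 * of_bool (6 dvd n)"
    unfolding r_def by (simp add: dvd_mod_iff)
  finally show ?thesis .
qed

lemma sums_inverse_power_multiples:
  assumes "(\<lambda>m. 1 / real (Suc m) ^ k) sums z" "0 < d"
  shows "(\<lambda>m. of_bool (d dvd Suc m) / real (Suc m) ^ k) sums (z / real d ^ k)"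
proof -
  obtain e where d: "d = Suc e"
    using assms(2) gr0_implies_Suc by blast
  define g where "g n = d * n + e" for n
  have Suc_g: "Suc (g n) = d * Suc n" for n
    unfolding g_def d by simp
  have mono: "strict_mono g"
    unfolding g_def d by (rule strict_monoI) (metis add_less_cancel_right mult_less_mono2 zero_less_Suc)
  have zero: "of_bool (d dvd Suc m) / real (Suc m) ^ k = 0" if "m \<notin> range g" for m
  proof -
    have "\<not> d dvd Suc m"
    proof
      assume "d dvd Suc m"
      then obtain j where j: "Suc m = d * j" ..
      then obtain i where "j = Suc i"
        by (cases j) auto
      then have "m = g i"
        using j unfolding g_def d by simp
      with that show False
        by blast
    qed
    then show ?thesis
      by simp
  qed
  have "(\<lambda>n. of_bool (d dvd Suc (g n)) / real (Suc (g n)) ^ k)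
      = (\<lambda>n. 1 / real d ^ k * (1 / real (Suc n) ^ k))"
    unfolding Suc_g of_nat_mult power_mult_distrib by simp
  then have reindexed: "(\<lambda>n. of_bool (d dvd Suc (g n)) / real (Suc (g n)) ^ k) sums (z / real d ^ k)"
    using sums_mult[OF assms(1), of "1 / real d ^ k"] by simp
  show ?thesis
    by (rule iffD1[OF sums_mono_reindex[where f = "\<lambda>m. of_bool (d dvd Suc m) / real (Suc m) ^ k",
          OF mono zero] reindexed])
qed

lemma Re_polylog_series_cis_pi_div_3:
  assumes "2 \<le> k"
  shows "Re (polylog_series k (cis (pi / 3)))
           = (1/2 - 1 / 2 ^ k - 3/2 / 3 ^ k + 3 / 6 ^ k) * (\<Sum>m. 1 / real (Suc m) ^ k)"
proof -
  define z where "z = (\<Sum>m. 1 / real (Suc m) ^ k)"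
  have z: "(\<lambda>m. 1 / real (Suc m) ^ k) sums z"
    unfolding z_def using summable_inverse_Suc_power[OF assms] by (rule summable_sums)
  have "(\<lambda>m. Re (cis (pi / 3) ^ Suc m / of_nat (Suc m) ^ k)) sums Re (polylog_series k (cis (pi / 3)))"
    using summable_polylog_series[of "cis (pi / 3)" k] assms
    unfolding polylog_series_def by (intro sums_Re summable_sums) simp_all
  moreover have "Re (cis (pi / 3) ^ Suc m / of_nat (Suc m) ^ k)
      = 1/2 * (1 / real (Suc m) ^ k) - of_bool (2 dvd Suc m) / real (Suc m) ^ k
        - 3/2 * (of_bool (3 dvd Suc m) / real (Suc m) ^ k) + 3 * (of_bool (6 dvd Suc m) / real (Suc m) ^ k)"
    for m
  proof -
    have "(of_nat (Suc m) ^ k :: complex) = of_real (real (Suc m) ^ k)"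
      by simp
    then have "Re (cis (pi / 3) ^ Suc m / of_nat (Suc m) ^ k) = cos (real (Suc m) * pi / 3) / real (Suc m) ^ k"
      by (simp only: Complex.DeMoivre Re_divide_of_real cis.sel times_divide_eq_right)
    also have "\<dots> = 1/2 * (1 / real (Suc m) ^ k) - of_bool (2 dvd Suc m) / real (Suc m) ^ k
        - 3/2 * (of_bool (3 dvd Suc m) / real (Suc m) ^ k) + 3 * (of_bool (6 dvd Suc m) / real (Suc m) ^ k)"
      unfolding cos_nat_mult_pi_div_3 by (simp add: field_simps del: of_nat_Suc)
    finally show ?thesis .
  qed
  moreover have "(\<lambda>m. 1/2 * (1 / real (Suc m) ^ k) - of_bool (2 dvd Suc m) / real (Suc m) ^ k
        - 3/2 * (of_bool (3 dvd Suc m) / real (Suc m) ^ k) + 3 * (of_bool (6 dvd Suc m) / real (Suc m) ^ k))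
      sums (1/2 * z - z / real 2 ^ k - 3/2 * (z / real 3 ^ k) + 3 * (z / real 6 ^ k))"
    by (intro sums_add sums_diff sums_mult sums_inverse_power_multiples z) simp_all
  ultimately have "Re (polylog_series k (cis (pi / 3)))
      = 1/2 * z - z / real 2 ^ k - 3/2 * (z / real 3 ^ k) + 3 * (z / real 6 ^ k)"
    by (simp add: sums_unique2)
  then show ?thesis
    unfolding z_def[symmetric] by (simp add: field_simps)
qed

lemma polylog_series_cis_pi_div_3_minus_at_1_in_weight_space:
  assumes "2 \<le> k" "\<And>j. 2 \<le> j \<Longrightarrow> j < k \<Longrightarrow> polylog_series j 1 \<in> weight_space j"
  shows "polylog_series k (cis (pi / 3)) - polylog_series k 1 \<in> weight_space k"
proof -
  define T where "T i = ((pi / 3) ^ i / fact i) *\<^sub>R (\<i> ^ i * polylog_series (k - i) 1)" for i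
  obtain p where p: "k - 1 = Suc p"
    using assms(1) by (cases "k - 1") auto
  have "T (Suc i) \<in> weight_space k" if "i < p" for i
  proof -
    have "T (Suc i) = of_real (1 / (3 ^ Suc i * fact (Suc i)) * pi ^ Suc i) * \<i> ^ Suc i
        * polylog_series (k - Suc i) 1"
      unfolding T_def by (simp add: scaleR_conv_of_real power_divide)
    also have "\<dots> \<in> weight_space (k - Suc i + Suc i)"
      using assms(2)[of "k - Suc i"] that p
      by (intro weight_space_mult_i_pi_power) (auto simp: fact_in_Rats)
    finally show ?thesis
      using that p by simp
  qed
  then have "(\<Sum>i<p. T (Suc i)) \<in> weight_space k"
    by (intro weight_space_sum) auto
  moreover have "polylog_series k (cis (pi / 3)) - (\<Sum>i<k - 1. T i) \<in> weight_space k"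
    unfolding T_def by (rule polylog_series_cis_pi_div_3_remainder_in_weight_space[OF assms(1)])
  moreover have "(\<Sum>i<k - 1. T i) = polylog_series k 1 + (\<Sum>i<p. T (Suc i))"
    unfolding p sum.lessThan_Suc_shift by (simp add: T_def)
  then have "polylog_series k (cis (pi / 3)) - polylog_series k 1
      = (polylog_series k (cis (pi / 3)) - (\<Sum>i<k - 1. T i)) + (\<Sum>i<p. T (Suc i))"
    by (simp add: algebra_simps)
  ultimately show ?thesis
    by (metis weight_space_add)
qed

lemma polylog_series_at_1_in_weight_space:
  "2 \<le> k \<Longrightarrow> polylog_series k 1 \<in> weight_space k"
proof (induction k rule: less_induct)
  case (less k)
  define z where "z = (\<Sum>m. 1 / real (Suc m) ^ k)"
  define c :: real where "c = 1/2 - 1 / 2 ^ k - 3/2 / 3 ^ k + 3 / 6 ^ k"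
  have zeta: "polylog_series k 1 = of_real z"
    unfolding z_def by (rule polylog_series_at_1[OF less.prems])
  have "c < 1"
  proof -
    have "(36 :: real) \<le> 6 ^ k"
      using power_increasing[of 2 k "6 :: real"] less.prems by simp
    then have "3 / 6 ^ k \<le> (3 / 36 :: real)"
      by (intro divide_left_mono) auto
    moreover have "0 < (1 / 2 ^ k :: real)" "0 < (3 / 2 / 3 ^ k :: real)"
      by simp_all
    ultimately show ?thesis
      unfolding c_def by linarith
  qed
  have "of_real (Re (polylog_series k (cis (pi / 3)) - polylog_series k 1)) \<in> weight_space k"
    using less by (intro weight_space_Re polylog_series_cis_pi_div_3_minus_at_1_in_weight_space) auto
  moreover have "Re (polylog_series k (cis (pi / 3)) - polylog_series k 1) = (c - 1) * z"
    using Re_polylog_series_cis_pi_div_3[OF less.prems] unfolding zeta c_def z_def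
    by (simp add: algebra_simps)
  moreover have "1 / (c - 1) \<in> \<rat>"
    unfolding c_def by (intro Rats_divide Rats_diff Rats_add Rats_power) simp_all
  ultimately have "of_real (1 / (c - 1)) * of_real ((c - 1) * z) \<in> weight_space k"
    by (metis weight_space_scale)
  moreover have "1 / (c - 1) * ((c - 1) * z) = z"
    using \<open>c < 1\<close> by simp
  ultimately show ?case
    unfolding zeta by (metis of_real_mult)
qed

lemma polylog_series_cis_pi_div_3_in_weight_space:
  assumes "2 \<le> k"
  shows "polylog_series k (cis (pi / 3)) \<in> weight_space k"
proof -
  have "polylog_series k (cis (pi / 3)) - polylog_series k 1 \<in> weight_space k"
    using assms polylog_series_at_1_in_weight_space
    by (intro polylog_series_cis_pi_div_3_minus_at_1_in_weight_space) auto
  from weight_space_add[OF this polylog_series_at_1_in_weight_space[OF assms]] show ?thesis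
    by simp
qed

lemma polylog_1_cis_pi_div_3: "polylog 1 (cis (pi / 3)) = \<i> * Complex (pi / 3) 0"
proof -
  have "A_fun (pi / 3) = 0"
    using sin_30 unfolding A_fun_def by simp
  then show ?thesis
    using Ln_one_minus_cis[of "pi / 3"] unfolding polylog_def by (simp add: complex_eq_iff)
qed

lemma polylog_cis_pi_div_3_in_weight_space:
  assumes "0 < k"
  shows "polylog k (cis (pi / 3)) \<in> weight_space k"
proof (cases "k = 1")
  case True
  have "in_rat_span (pi / 3) {pi ^ 1}"
    using in_rat_span_scale[OF in_rat_span_base[of pi], of "{pi}" "1/3"] by simp
  then show ?thesis
    unfolding True polylog_1_cis_pi_div_3 using weight_space_intro[of "pi / 3" 1 0] by simp
next
  case False
  then show ?thesis
    using assms polylog_series_cis_pi_div_3_in_weight_space[of k]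
    by (simp add: polylog_eq_polylog_series)
qed

theorem theorem6:
  fixes k :: nat
  assumes "0 < k"
  shows "in_rat_span (Cl k (pi / 3)) (S_odd k 1)
       \<and> in_rat_span (Gl k (pi / 3)) (S_even k 1)
       \<and> S_even k 1 = S_even k 0 \<and> S_even k 0 = {pi ^ k}"
  using weight_space_parts[OF polylog_cis_pi_div_3_in_weight_space[OF assms]]
  unfolding Cl_def Gl_def by (simp add: S_even_eq_pi_power)

end
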